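(* Assume the setting in the context. For an integer $r\ge1$, if the $r$th central moment of $\hat\theta_i(z,\omega)$ exists, then \[ \mathbb E\bigl|\hat\theta_i(z,\omega)-\theta_i(\tilde y_i)\bigr|^r\le\bigl(2\|\tilde y_i\|_p\|\psi_i\|_q\bigr)^r \] for any $p,q\in[1,\infty]$ with $1/p+1/q=1/r$. In particular, for $r=2$, \[ \mathbb E\bigl[\hat\theta_i(z,\omega)-\theta_i(\tilde y_i)\bigr]^2\le\|\tilde y_i\|_p^2\|\psi_i\|_q^2 \] for any $p,q\in[1,\infty]$ with $1/p+1/q=1/2$. (These inequalities hold trivially if $\|\tilde y_i\|_p$ or $\|\psi_i\|_q$ is infinite.)
   Context: Let $(\Omega,\mathcal F,P)$ be a probability space (latent environment) and $\mathcal Z$ a measurable space of treatment assignments with a known randomisation probability measure $\mu$. The potential outcome of unit $i$ is a measurable map $\tilde y_i:\mathcal Z\times\Omega\to\mathbb R$ of the form $\tilde y_i(z,\omega)=y_i(z,x_i(\omega),\epsilon_i(\omega))$ with $y_i,x_i,\epsilon_i$ measurable. For $p\ge1$, $\|u\|_p=(\int|u(z,\omega)|^p\mu(\mathrm dz)P(\mathrm d\omega))^{1/p}$ (with the essential supremum for $p=\infty$); $\mathbb E$ denotes expectation with respect to $\mu(\mathrm dz)P(\mathrm d\omega)$. $\tilde y_i$ lies in a model space $\mathcal M_i\subset L^2(\mathcal Z\times\Omega)$ (taken closed) with inner product $\langle u,v\rangle=\mathbb E[uv]$. The treatment effect $\theta_i$ is a continuous linear functional on $\mathcal M_i$ with Riesz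 representer $\psi_i\in\mathcal M_i$, i.e. $\theta_i(u)=\langle u,\psi_i\rangle$ for all $u\in\mathcal M_i$. The Riesz estimator is $\hat\theta_i(z,\omega)=\tilde y_i(z,\omega)\psi_i(z,\omega)$. *)

theory Defs
  imports "HOL-Probability.Probability"
begin

definition lp_norm :: "'a measure \<Rightarrow> ennreal \<Rightarrow> ('a \<Rightarrow> real) \<Rightarrow> ennreal" where
  "lp_norm M p u =
     (if p = \<infinity> then esssup M (\<lambda>x. ennreal \<bar>u x\<bar>)
      else (let I = (\<integral>\<^sup>+ x. ennreal (\<bar>u x\<bar> powr enn2real p) \<partial>M)
            in if I = \<infinity> then \<infinity> else ennreal (enn2real I powr (1 / enn2real p))))"

end

theory Submission
  imports Defs
begin

text \<open>By the Riesz property the estimator X = ytil \<psi> has mean \<theta>(ytil). Convexity of |x|^r and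
  Jensen's inequality give E|X - E X|^r \<le> 2^r E|X|^r (for r = 2 simply Var X \<le> E X^2), and
  E|X|^r \<le> (\<parallel>ytil\<parallel>_p \<parallel>\<psi>\<parallel>_q)^r is the generalised Hoelder inequality, obtained from the classical
  one applied to |ytil|^r and |\<psi>|^r with the conjugate exponents p/r and q/r.\<close>

lemma lp_norm_ennreal:
  assumes "p > 0"
  shows "lp_norm M (ennreal p) u =
    (let I = \<integral>\<^sup>+ x. ennreal (\<bar>u x\<bar> powr p) \<partial>M in
     if I = \<infinity> then \<infinity> else ennreal (enn2real I powr (1 / p)))"
  using assms by (simp add: lp_norm_def Let_def)

lemma lp_norm_one: "lp_norm M 1 u = (\<integral>\<^sup>+ x. ennreal \<bar>u x\<bar> \<partial>M)"
  by (simp add: lp_norm_def Let_def ennreal_enn2real_if)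

lemma AE_eq_0_if_lp_norm_eq_0:
  assumes "p > 0" "u \<in> borel_measurable M" "lp_norm M (ennreal p) u = 0"
  shows "AE x in M. u x = 0"
proof -
  have "(\<integral>\<^sup>+ x. ennreal (\<bar>u x\<bar> powr p) \<partial>M) = 0"
    using assms by (auto simp: lp_norm_ennreal Let_def enn2real_eq_0_iff split: if_splits)
  then have "AE x in M. ennreal (\<bar>u x\<bar> powr p) = 0"
    using assms(2) by (simp add: nn_integral_0_iff_AE)
  then show ?thesis by eventually_elim simp
qed

lemma lp_norm_abs_power:
  assumes "p > 0" "r \<ge> 1"
  shows "lp_norm M (ennreal (p / r)) (\<lambda>x. \<bar>u x\<bar> ^ r) = lp_norm M (ennreal p) u ^ r"
proof -
  define I where "I = (\<integral>\<^sup>+ x. ennreal (\<bar>u x\<bar> powr p) \<partial>M)"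
  have "\<bar>\<bar>a\<bar> ^ r\<bar> powr (p / r) = \<bar>a\<bar> powr p" for a :: real
    using assms by (simp add: powr_realpow' [symmetric] powr_powr)
  then have "lp_norm M (ennreal (p / r)) (\<lambda>x. \<bar>u x\<bar> ^ r) =
      (if I = \<infinity> then \<infinity> else ennreal (enn2real I powr (r / p)))"
    using assms by (simp add: lp_norm_ennreal I_def)
  moreover have "enn2real I powr (r / p) = (enn2real I powr (1 / p)) ^ r"
    using assms by (cases "enn2real I = 0") (auto simp: powr_power)
  ultimately show ?thesis
    using assms by (simp add: lp_norm_ennreal I_def[symmetric] ennreal_power)
qed

lemma nn_integral_abs_power_eq_lp_norm:
  assumes "r \<ge> 1"
  shows "(\<integral>\<^sup>+ x. ennreal (\<bar>u x\<bar> ^ r) \<partial>M) = lp_norm M (of_nat r) u ^ r"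
  using lp_norm_abs_power[of "real r" r M u] lp_norm_one[of M "\<lambda>x. \<bar>u x\<bar> ^ r"] assms
  by (simp add: ennreal_of_nat_eq_real_of_nat)

lemma Youngs_inequality_scaled:
  fixes a b A B p q :: real
  assumes "p > 1" "q > 1" "1/p + 1/q = 1" "A > 0" "B > 0"
  shows "\<bar>a * b\<bar> \<le> A * B * (\<bar>a\<bar> powr p / (p * A powr p) + \<bar>b\<bar> powr q / (q * B powr q))"
proof -
  have "(\<bar>a\<bar> / A) * (\<bar>b\<bar> / B) \<le> (\<bar>a\<bar> / A) powr p / p + (\<bar>b\<bar> / B) powr q / q"
    using assms by (intro Youngs_inequality) auto
  then show ?thesis
    using assms by (simp add: powr_divide abs_mult field_simps)
qed

lemma nn_integral_abs_mult_le_lp_norm: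
  fixes f g :: "'a \<Rightarrow> real" and p q :: real
  assumes pq: "p > 1" "q > 1" "1/p + 1/q = 1"
    and [measurable]: "f \<in> borel_measurable M" "g \<in> borel_measurable M"
  shows "(\<integral>\<^sup>+ x. ennreal \<bar>f x * g x\<bar> \<partial>M) \<le> lp_norm M (ennreal p) f * lp_norm M (ennreal q) g"
proof (cases "lp_norm M (ennreal p) f = 0 \<or> lp_norm M (ennreal q) g = 0")
  case True
  then have "AE x in M. f x * g x = 0"
    using pq AE_eq_0_if_lp_norm_eq_0[of p f M] AE_eq_0_if_lp_norm_eq_0[of q g M]
    by (auto elim: eventually_mono)
  then have "(\<integral>\<^sup>+ x. ennreal \<bar>f x * g x\<bar> \<partial>M) = 0"
    by (simp add: nn_integral_0_iff_AE)
  then show ?thesis by simp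
next
  case nonzero: False
  define F where "F = (\<integral>\<^sup>+ x. ennreal (\<bar>f x\<bar> powr p) \<partial>M)"
  define G where "G = (\<integral>\<^sup>+ x. ennreal (\<bar>g x\<bar> powr q) \<partial>M)"
  show ?thesis
  proof (cases "F = \<infinity> \<or> G = \<infinity>")
    case True
    then have "lp_norm M (ennreal p) f * lp_norm M (ennreal q) g = \<infinity>"
      using nonzero pq by (auto simp: lp_norm_ennreal F_def[symmetric] G_def[symmetric] ennreal_mult_eq_top_iff)
    then show ?thesis by simp
  next
    case False
    define A where "A = enn2real F powr (1/p)"
    define B where "B = enn2real G powr (1/q)"
    have norms: "lp_norm M (ennreal p) f = ennreal A" "lp_norm M (ennreal q) g = ennreal B"
      using False pq by (simp_all add: lp_norm_ennreal A_def B_def F_def[symmetric] G_def[symmetric])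
    then have AB: "A > 0" "B > 0"
      using nonzero by (auto simp: A_def B_def)
    have F: "F = ennreal (A powr p)" and G: "G = ennreal (B powr q)"
      using False pq by (simp_all add: A_def B_def powr_powr ennreal_enn2real_if top.not_eq_extremum)
    have "(\<integral>\<^sup>+ x. ennreal \<bar>f x * g x\<bar> \<partial>M) \<le>
        (\<integral>\<^sup>+ x. ennreal (A * B / (p * A powr p)) * ennreal (\<bar>f x\<bar> powr p)
               + ennreal (A * B / (q * B powr q)) * ennreal (\<bar>g x\<bar> powr q) \<partial>M)"
      using Youngs_inequality_scaled[OF pq AB] pq AB
      by (intro nn_integral_mono) (auto simp: ring_distribs simp flip: ennreal_mult ennreal_plus)
    also have "\<dots> = ennreal (A * B / (p * A powr p)) * F + ennreal (A * B / (q * B powr q)) * G"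
      by (simp add: F_def G_def nn_integral_add nn_integral_cmult)
    also have "\<dots> = ennreal (A * B * (1/p + 1/q))"
      using pq AB by (simp add: F G ring_distribs field_simps flip: ennreal_mult ennreal_plus)
    finally show ?thesis
      using pq AB by (simp add: norms flip: ennreal_mult)
  qed
qed

lemma nn_integral_abs_mult_power_le_esssup:
  fixes f g :: "'a \<Rightarrow> real"
  assumes "g \<in> borel_measurable M" "r \<ge> 1"
  shows "(\<integral>\<^sup>+ x. ennreal (\<bar>f x * g x\<bar> ^ r) \<partial>M) \<le> (lp_norm M \<infinity> f * lp_norm M (of_nat r) g) ^ r"
proof -
  define S where "S = esssup M (\<lambda>x. ennreal \<bar>f x\<bar>)"
  have "AE x in M. ennreal \<bar>f x\<bar> \<le> S"
    unfolding S_def by (rule esssup_AE)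
  then have "AE x in M. ennreal (\<bar>f x * g x\<bar> ^ r) \<le> S ^ r * ennreal (\<bar>g x\<bar> ^ r)"
  proof eventually_elim
    case (elim x)
    have "ennreal (\<bar>f x * g x\<bar> ^ r) = ennreal \<bar>f x\<bar> ^ r * ennreal (\<bar>g x\<bar> ^ r)"
      by (simp add: abs_mult power_mult_distrib ennreal_mult ennreal_power)
    also have "\<dots> \<le> S ^ r * ennreal (\<bar>g x\<bar> ^ r)"
      using elim by (intro mult_right_mono power_mono) auto
    finally show ?case .
  qed
  then have "(\<integral>\<^sup>+ x. ennreal (\<bar>f x * g x\<bar> ^ r) \<partial>M) \<le> (\<integral>\<^sup>+ x. S ^ r * ennreal (\<bar>g x\<bar> ^ r) \<partial>M)"
    by (rule nn_integral_mono_AE)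
  also have "\<dots> = S ^ r * lp_norm M (of_nat r) g ^ r"
    using assms by (simp add: nn_integral_cmult nn_integral_abs_power_eq_lp_norm)
  finally show ?thesis
    by (simp add: S_def lp_norm_def power_mult_distrib)
qed

lemma ennreal_inverse_eq_iff: "inverse (x :: ennreal) = inverse y \<longleftrightarrow> x = y"
  by (metis divide_ennreal_def one_divide_one_divide_ennreal)

lemma Holder_exponent_cases:
  fixes p q :: ennreal
  assumes pq: "inverse p + inverse q = inverse (of_nat r)" and r: "r \<ge> 1"
  obtains "p = \<infinity>" "q = of_nat r"
    | "q = \<infinity>" "p = of_nat r"
    | p' q' where "p = ennreal p'" "q = ennreal q'" "r < p'" "r < q'" "1/p' + 1/q' = 1/r"
proof -
  have inv_r: "inverse (of_nat r :: ennreal) = ennreal (1 / r)"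
    using r by (simp add: ennreal_of_nat_eq_real_of_nat inverse_ennreal divide_inverse)
  have "p \<noteq> 0" "q \<noteq> 0"
    using pq by (auto simp: inv_r)
  show thesis
  proof (cases p rule: ennreal_cases)
    case top
    then show thesis
      using pq that(1) by (simp add: ennreal_inverse_eq_iff)
  next
    case p_fin: (real p')
    show thesis
    proof (cases q rule: ennreal_cases)
      case top
      then show thesis
        using pq that(2) by (simp add: ennreal_inverse_eq_iff)
    next
      case q_fin: (real q')
      have "p' > 0" "q' > 0"
        using \<open>p \<noteq> 0\<close> \<open>q \<noteq> 0\<close> p_fin q_fin by auto
      then have sum: "1/p' + 1/q' = 1/r"
        using pq p_fin q_fin r
        by (simp add: inv_r inverse_ennreal divide_inverse flip: ennreal_plus)
      moreover have "1/p' < 1/r" "1/q' < 1/r"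
        using sum \<open>p' > 0\<close> \<open>q' > 0\<close> by (simp_all add: add_pos_pos flip: sum)
      ultimately have "r < p'" "r < q'"
        using \<open>p' > 0\<close> \<open>q' > 0\<close> r by (simp_all add: divide_less_eq)
      then show thesis
        using that(3) p_fin q_fin sum by blast
    qed
  qed
qed

lemma nn_integral_abs_mult_power_le_lp_norm:
  fixes f g :: "'a \<Rightarrow> real" and p q :: ennreal
  assumes [measurable]: "f \<in> borel_measurable M" "g \<in> borel_measurable M"
    and pq: "inverse p + inverse q = inverse (of_nat r)" and r: "r \<ge> 1"
  shows "(\<integral>\<^sup>+ x. ennreal (\<bar>f x * g x\<bar> ^ r) \<partial>M) \<le> (lp_norm M p f * lp_norm M q g) ^ r"
  using pq r
proof (cases rule: Holder_exponent_cases)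
  case 1
  then show ?thesis
    using nn_integral_abs_mult_power_le_esssup[of g M r f] r by simp
next
  case 2
  then show ?thesis
    using nn_integral_abs_mult_power_le_esssup[of f M r g] r by (simp add: mult.commute)
next
  case (3 p' q')
  have "1 / (p' / r) + 1 / (q' / r) = r * (1/p' + 1/q')"
    by (simp add: algebra_simps)
  also have "\<dots> = 1"
    using 3 r by simp
  finally have "1 / (p' / r) + 1 / (q' / r) = 1" .
  moreover have "1 < p' / r" "1 < q' / r"
    using 3 r by simp_all
  ultimately have "(\<integral>\<^sup>+ x. ennreal \<bar>\<bar>f x\<bar> ^ r * \<bar>g x\<bar> ^ r\<bar> \<partial>M)
      \<le> lp_norm M (ennreal (p' / r)) (\<lambda>x. \<bar>f x\<bar> ^ r) * lp_norm M (ennreal (q' / r)) (\<lambda>x. \<bar>g x\<bar> ^ r)"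
    by (intro nn_integral_abs_mult_le_lp_norm) auto
  also have "\<dots> = (lp_norm M p f * lp_norm M q g) ^ r"
    using 3 r by (simp add: lp_norm_abs_power power_mult_distrib)
  finally show ?thesis
    by (simp add: abs_mult power_mult_distrib)
qed

lemma convex_on_abs_power: "convex_on UNIV (\<lambda>x::real. \<bar>x\<bar> ^ n)"
proof (rule convex_onI)
  have convex_nonneg: "convex_on {0::real..} (\<lambda>x. x ^ n)"
    by (cases "even n") (auto intro: convex_on_subset[OF convex_power_even] convex_power_odd)
  fix t x y :: real assume t: "0 < t" "t < 1"
  have "\<bar>(1 - t) *\<^sub>R x + t *\<^sub>R y\<bar> ^ n \<le> ((1 - t) * \<bar>x\<bar> + t * \<bar>y\<bar>) ^ n"
    using t by (intro power_mono) (auto simp: abs_mult intro!: order.trans[OF abs_triangle_ineq])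
  also have "\<dots> \<le> (1 - t) * \<bar>x\<bar> ^ n + t * \<bar>y\<bar> ^ n"
    using convex_onD[OF convex_nonneg, of t "\<bar>x\<bar>" "\<bar>y\<bar>"] t by auto
  finally show "\<bar>(1 - t) *\<^sub>R x + t *\<^sub>R y\<bar> ^ n \<le> (1 - t) * \<bar>x\<bar> ^ n + t * \<bar>y\<bar> ^ n" .
qed auto

lemma abs_diff_power_le: "\<bar>a - b :: real\<bar> ^ n \<le> 2 ^ n * ((\<bar>a\<bar> ^ n + \<bar>b\<bar> ^ n) / 2)"
proof -
  have "\<bar>(1 - 1/2) *\<^sub>R a + (1/2) *\<^sub>R (-b)\<bar> ^ n \<le> (1 - 1/2) * \<bar>a\<bar> ^ n + (1/2) * \<bar>-b\<bar> ^ n"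
    using convex_onD[OF convex_on_abs_power, of "1/2" a "-b"] by simp
  then have "(\<bar>a - b\<bar> / 2) ^ n \<le> (\<bar>a\<bar> ^ n + \<bar>b\<bar> ^ n) / 2"
    by (simp add: field_simps abs_divide)
  then show ?thesis
    by (simp add: power_divide field_simps)
qed

lemma (in prob_space) central_moment_le:
  fixes X :: "'a \<Rightarrow> real"
  assumes X: "integrable M X"
  shows "ennreal (expectation (\<lambda>x. \<bar>X x - expectation X\<bar> ^ r)) \<le> 2 ^ r * (\<integral>\<^sup>+ x. ennreal (\<bar>X x\<bar> ^ r) \<partial>M)"
proof (cases "(\<integral>\<^sup>+ x. ennreal (\<bar>X x\<bar> ^ r) \<partial>M) = \<infinity>")
  case True
  then show ?thesis by (simp add: ennreal_mult_top)
next
  case False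
  have [measurable]: "X \<in> borel_measurable M"
    using X by simp
  have "(\<lambda>x. \<bar>X x\<bar> ^ r) \<in> borel_measurable M" "AE x in M. 0 \<le> \<bar>X x\<bar> ^ r"
    by simp_all
  then have moment: "integrable M (\<lambda>x. \<bar>X x\<bar> ^ r)"
    using False by (intro integrableI_nonneg) (simp_all add: less_top[symmetric])
  have Jensen: "\<bar>expectation X\<bar> ^ r \<le> expectation (\<lambda>x. \<bar>X x\<bar> ^ r)"
    using jensens_inequality[OF X, where I = UNIV and q = "\<lambda>x. \<bar>x\<bar> ^ r"] moment convex_on_abs_power
    by simp
  have "expectation (\<lambda>x. \<bar>X x - expectation X\<bar> ^ r)
      \<le> expectation (\<lambda>x. 2 ^ r * ((\<bar>X x\<bar> ^ r + \<bar>expectation X\<bar> ^ r) / 2))"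
    using moment by (intro integral_mono' abs_diff_power_le) auto
  also have "\<dots> = 2 ^ r * ((expectation (\<lambda>x. \<bar>X x\<bar> ^ r) + \<bar>expectation X\<bar> ^ r) / 2)"
    using moment by (simp add: prob_space)
  also have "\<dots> \<le> 2 ^ r * expectation (\<lambda>x. \<bar>X x\<bar> ^ r)"
    using Jensen by simp
  finally have "ennreal (expectation (\<lambda>x. \<bar>X x - expectation X\<bar> ^ r))
      \<le> ennreal (2 ^ r * expectation (\<lambda>x. \<bar>X x\<bar> ^ r))"
    by (rule ennreal_leI)
  also have "\<dots> = 2 ^ r * ennreal (expectation (\<lambda>x. \<bar>X x\<bar> ^ r))"
    by (simp add: ennreal_mult' flip: ennreal_power)
  also have "\<dots> = 2 ^ r * (\<integral>\<^sup>+ x. ennreal (\<bar>X x\<bar> ^ r) \<partial>M)"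
    using moment by (simp add: nn_integral_eq_integral)
  finally show ?thesis .
qed

lemma (in prob_space) variance_le_second_moment:
  fixes X :: "'a \<Rightarrow> real"
  assumes X: "integrable M X"
  shows "ennreal (variance X) \<le> (\<integral>\<^sup>+ x. ennreal ((X x)\<^sup>2) \<partial>M)"
proof (cases "integrable M (\<lambda>x. (X x)\<^sup>2)")
  case True
  have "variance X \<le> expectation (\<lambda>x. (X x)\<^sup>2)"
    using variance_eq[OF X True] zero_le_power2[of "expectation X"] by linarith
  then have "ennreal (variance X) \<le> ennreal (expectation (\<lambda>x. (X x)\<^sup>2))"
    by (rule ennreal_leI)
  also have "ennreal (expectation (\<lambda>x. (X x)\<^sup>2)) = (\<integral>\<^sup>+ x. ennreal ((X x)\<^sup>2) \<partial>M)"
    using True by (rule nn_integral_eq_integral[symmetric]) simp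
  finally show ?thesis .
next
  case False
  have [measurable]: "X \<in> borel_measurable M"
    using X by simp
  have "(\<lambda>x. (X x)\<^sup>2) \<in> borel_measurable M" "AE x in M. 0 \<le> (X x)\<^sup>2"
    by simp_all
  then have "\<not> (\<integral>\<^sup>+ x. ennreal ((X x)\<^sup>2) \<partial>M) < \<infinity>"
    using False integrableI_nonneg[of "\<lambda>x. (X x)\<^sup>2" M] by blast
  then show ?thesis
    by (simp add: not_less top_unique)
qed

lemma integrable_mult_if_square_integrable:
  fixes f g :: "'a \<Rightarrow> real"
  assumes [measurable]: "f \<in> borel_measurable M" "g \<in> borel_measurable M"
    and "integrable M (\<lambda>x. (f x)\<^sup>2)" "integrable M (\<lambda>x. (g x)\<^sup>2)"
  shows "integrable M (\<lambda>x. f x * g x)"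
proof (rule Bochner_Integration.integrable_bound)
  show "integrable M (\<lambda>x. (f x)\<^sup>2 + (g x)\<^sup>2)"
    using assms by simp
  show "AE x in M. norm (f x * g x) \<le> norm ((f x)\<^sup>2 + (g x)\<^sup>2)"
  proof (intro AE_I2)
    fix x
    have "2 * (\<bar>f x\<bar> * \<bar>g x\<bar>) \<le> (f x)\<^sup>2 + (g x)\<^sup>2"
      using sum_squares_bound[of "\<bar>f x\<bar>" "\<bar>g x\<bar>"] by simp
    moreover have "0 \<le> \<bar>f x\<bar> * \<bar>g x\<bar>"
      by simp
    ultimately have "\<bar>f x\<bar> * \<bar>g x\<bar> \<le> (f x)\<^sup>2 + (g x)\<^sup>2"
      by linarith
    then show "norm (f x * g x) \<le> norm ((f x)\<^sup>2 + (g x)\<^sup>2)"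
      by (simp add: abs_mult)
  qed
qed simp

lemma (in prob_space) central_moment_mult_le_lp_norm:
  fixes f g :: "'a \<Rightarrow> real" and p q :: ennreal
  assumes "f \<in> borel_measurable M" "g \<in> borel_measurable M" "integrable M (\<lambda>x. f x * g x)"
    and "inverse p + inverse q = inverse (of_nat r)" "r \<ge> 1"
  shows "ennreal (expectation (\<lambda>x. \<bar>f x * g x - expectation (\<lambda>x. f x * g x)\<bar> ^ r))
    \<le> (2 * lp_norm M p f * lp_norm M q g) ^ r"
proof -
  have "ennreal (expectation (\<lambda>x. \<bar>f x * g x - expectation (\<lambda>x. f x * g x)\<bar> ^ r))
      \<le> 2 ^ r * (\<integral>\<^sup>+ x. ennreal (\<bar>f x * g x\<bar> ^ r) \<partial>M)"
    using assms(3) by (rule central_moment_le)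
  also have "\<dots> \<le> 2 ^ r * (lp_norm M p f * lp_norm M q g) ^ r"
    using assms by (intro mult_left_mono nn_integral_abs_mult_power_le_lp_norm) auto
  finally show ?thesis
    by (simp add: power_mult_distrib mult.assoc)
qed

lemma (in prob_space) variance_mult_le_lp_norm:
  fixes f g :: "'a \<Rightarrow> real" and p q :: ennreal
  assumes "f \<in> borel_measurable M" "g \<in> borel_measurable M" "integrable M (\<lambda>x. f x * g x)"
    and "inverse p + inverse q = inverse 2"
  shows "ennreal (variance (\<lambda>x. f x * g x)) \<le> (lp_norm M p f)\<^sup>2 * (lp_norm M q g)\<^sup>2"
proof -
  have "ennreal (variance (\<lambda>x. f x * g x)) \<le> (\<integral>\<^sup>+ x. ennreal (\<bar>f x * g x\<bar> ^ 2) \<partial>M)"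
    unfolding power2_abs using assms(3) by (rule variance_le_second_moment)
  also have "\<dots> \<le> (lp_norm M p f * lp_norm M q g) ^ 2"
    using assms by (intro nn_integral_abs_mult_power_le_lp_norm) auto
  finally show ?thesis
    by (simp add: power_mult_distrib)
qed

theorem lemma2:
  fixes \<mu> :: "'z measure" and P :: "'w measure"
    and X :: "'x measure" and E :: "'e measure"
    and y :: "'z \<Rightarrow> 'x \<Rightarrow> 'e \<Rightarrow> real" and xi :: "'w \<Rightarrow> 'x" and \<epsilon> :: "'w \<Rightarrow> 'e"
    and ytil :: "'z \<times> 'w \<Rightarrow> real"
    and Mi :: "('z \<times> 'w \<Rightarrow> real) set"
    and \<theta> :: "('z \<times> 'w \<Rightarrow> real) \<Rightarrow> real"
    and \<psi> :: "'z \<times> 'w \<Rightarrow> real"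
    and r :: nat
  assumes mu: "prob_space \<mu>" and Pp: "prob_space P"
    and y_meas: "(\<lambda>(z, x, e). y z x e) \<in> borel_measurable (\<mu> \<Otimes>\<^sub>M (X \<Otimes>\<^sub>M E))"
    and xi_meas: "xi \<in> measurable P X" and eps_meas: "\<epsilon> \<in> measurable P E"
    and ytil_def: "ytil = (\<lambda>(z, \<omega>). y z (xi \<omega>) (\<epsilon> \<omega>))"
    and Mi_L2: "Mi \<subseteq> {u. u \<in> borel_measurable (\<mu> \<Otimes>\<^sub>M P) \<and>
                              integrable (\<mu> \<Otimes>\<^sub>M P) (\<lambda>v. (u v)\<^sup>2)}"
    and Mi_zero: "(\<lambda>_. 0) \<in> Mi"
    and Mi_lin: "\<forall>u \<in> Mi. \<forall>w \<in> Mi. \<forall>c::real. (\<lambda>v. u v + c * w v) \<in> Mi"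
    and ytil_in: "ytil \<in> Mi"
    and psi_in: "\<psi> \<in> Mi"
    and riesz: "\<forall>u \<in> Mi. \<theta> u = (\<integral>v. u v * \<psi> v \<partial>(\<mu> \<Otimes>\<^sub>M P))"
    and r_ge: "r \<ge> 1"
    and moment: "integrable (\<mu> \<Otimes>\<^sub>M P) (\<lambda>v. \<bar>ytil v * \<psi> v - \<theta> ytil\<bar> ^ r)"
  shows "(\<forall>p q. 1 \<le> p \<and> 1 \<le> q \<and> inverse p + inverse q = inverse (of_nat r) \<longrightarrow>
            ennreal (\<integral>v. \<bar>ytil v * \<psi> v - \<theta> ytil\<bar> ^ r \<partial>(\<mu> \<Otimes>\<^sub>M P))
              \<le> (2 * lp_norm (\<mu> \<Otimes>\<^sub>M P) p ytil * lp_norm (\<mu> \<Otimes>\<^sub>M P) q \<psi>) ^ r)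
       \<and> (\<forall>p q. 1 \<le> p \<and> 1 \<le> q \<and> inverse p + inverse q = inverse (2::ennreal) \<longrightarrow>
            ennreal (\<integral>v. (ytil v * \<psi> v - \<theta> ytil)\<^sup>2 \<partial>(\<mu> \<Otimes>\<^sub>M P))
              \<le> (lp_norm (\<mu> \<Otimes>\<^sub>M P) p ytil)\<^sup>2 * (lp_norm (\<mu> \<Otimes>\<^sub>M P) q \<psi>)\<^sup>2)"
proof -
  interpret pair_prob_space \<mu> P
    using mu Pp by (simp add: pair_prob_space_def pair_sigma_finite_def prob_space_imp_sigma_finite)
  have [measurable]: "ytil \<in> borel_measurable (\<mu> \<Otimes>\<^sub>M P)" "\<psi> \<in> borel_measurable (\<mu> \<Otimes>\<^sub>M P)"
    and "integrable (\<mu> \<Otimes>\<^sub>M P) (\<lambda>v. (ytil v)\<^sup>2)" "integrable (\<mu> \<Otimes>\<^sub>M P) (\<lambda>v. (\<psi> v)\<^sup>2)"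
    using Mi_L2 ytil_in psi_in by auto
  then have estimator: "integrable (\<mu> \<Otimes>\<^sub>M P) (\<lambda>v. ytil v * \<psi> v)"
    by (rule integrable_mult_if_square_integrable)
  have mean: "\<theta> ytil = (\<integral>v. ytil v * \<psi> v \<partial>(\<mu> \<Otimes>\<^sub>M P))"
    using riesz ytil_in by simp
  show ?thesis
    unfolding mean
    using P.central_moment_mult_le_lp_norm[OF _ _ estimator]
      P.variance_mult_le_lp_norm[OF _ _ estimator] r_ge
    by simp
qed

end
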